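(* Let $\mathcal{S}$ be an $E$-unitary inverse semigroupoid, $X$ a partially ordered set, and $\theta=(\{X_s\}_{s\in\mathcal{S}},\{\theta_s\}_{s\in\mathcal{S}})$ an ordered global action of $\mathcal{S}$ on $X$. For $s\in\mathcal{S}$ put $D_{\pi_\sigma(s)}=\bigcup_{t:(s,t)\in\sigma}X_t$. Then: if $(s,t)\in\sigma$ and $x\in X_{s^*}\cap X_{t^*}$, then $\theta_s(x)=\theta_t(x)$; consequently $\alpha_{\pi_\sigma(s)}:D_{\pi_\sigma(s^* )}\to D_{\pi_\sigma(s)}$, $\alpha_{\pi_\sigma(s)}(x)=\theta_t(x)$ for any $t$ with $(s,t)\in\sigma$ and $x\in X_{t^*}$, is well defined, and $\alpha=(\{D_{\pi_\sigma(s)}\}_{s\in\mathcal{S}},\{\alpha_{\pi_\sigma(s)}\}_{s\in\mathcal{S}})$ is an ordered partial action of the groupoid $\mathcal{S}/\sigma$ on $X$ with $\alpha_{\pi_\sigma(s)}(x)=\theta_s(x)$ for all $x\in X_{s^*}$.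
   Context: Inverse semigroupoid: arrows $\mathcal{S}$, objects $\mathcal{S}^{(0)}$, maps $d,c$, associative multiplication on $\mathcal{S}^{(2)}=\{(s,t):d(s)=c(t)\}$ with $d(st)=d(t)$, $c(st)=c(s)$, unique $s^*$ with $ss^*s=s$, $s^*ss^*=s^*$; $E(\mathcal{S})$ = idempotents; natural order on parallel arrows $s\leqslant t$ iff $s=te$ for an idempotent $e$ with $(t,e)\in\mathcal{S}^{(2)}$. $(s,t)\in\sigma$ iff some $r\leqslant s,t$; $\sigma$ is a congruence (it relates only parallel arrows and is compatible with products), and $\mathcal{S}/\sigma$ is the groupoid whose arrows are $\sigma$-classes $\pi_\sigma(s)$, objects $\mathcal{S}^{(0)}$, $d(\pi_\sigma(s))=d(s)$, $c(\pi_\sigma(s))=c(s)$, $\pi_\sigma(s)\pi_\sigma(t)=\pi_\sigma(st)$, $\pi_\sigma(s)^*=\pi_\sigma(s^* )$. $\mathcal{S}$ is $E$-unitary if $(s,e)\in\sigma$ with $e$ idempotent implies $s$ idempotent. A partial action of $\mathcal{S}$ on a set $X$ is a pair $(\{X_s\},\{\theta_s\})$, $X_s\subseteq X$, $\theta_s:X_{s^*}\to X_s$, with: each $\theta_s$ bijective, $\theta_s^{-1}=\theta_{s^*}$, $X=\bigcup_sX_s$; $\theta_s\circ\theta_t\subseteq\theta_{st}$ as partial maps for $(s,t)\in\mathcal{S}^{(2)}$; $X_s\subseteq X_t$ if $s\leqslant t$. Global: $\theta_s\circ\theta_t=\theta_{st}$. Ordered (on a poset): each $X_s$ an order ideal and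 each $\theta_s$ an order isomorphism. *)

theory Defs
  imports Main
begin

text \<open>A semigroupoid is given by a set of arrows A, a set of objects A0, domain and
codomain maps d, c and a multiplication m, defined (meaningfully) on composable pairs
(s,t) with d s = c t.\<close>

definition inv_semigroupoid ::
  "'a set \<Rightarrow> 'o set \<Rightarrow> ('a \<Rightarrow> 'o) \<Rightarrow> ('a \<Rightarrow> 'o) \<Rightarrow> ('a \<Rightarrow> 'a \<Rightarrow> 'a) \<Rightarrow> bool" where
  "inv_semigroupoid A A0 d c m \<longleftrightarrow>
     (\<forall>s\<in>A. d s \<in> A0 \<and> c s \<in> A0) \<and>
     (\<forall>s\<in>A. \<forall>t\<in>A. d s = c t \<longrightarrow> m s t \<in> A \<and> d (m s t) = d t \<and> c (m s t) = c s) \<and>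
     (\<forall>r\<in>A. \<forall>s\<in>A. \<forall>t\<in>A. d r = c s \<longrightarrow> d s = c t \<longrightarrow> m (m r s) t = m r (m s t)) \<and>
     (\<forall>s\<in>A. \<exists>!u. u \<in> A \<and> d s = c u \<and> d u = c s \<and> m (m s u) s = s \<and> m (m u s) u = u)"

definition sinv :: "'a set \<Rightarrow> ('a \<Rightarrow> 'o) \<Rightarrow> ('a \<Rightarrow> 'o) \<Rightarrow> ('a \<Rightarrow> 'a \<Rightarrow> 'a) \<Rightarrow> 'a \<Rightarrow> 'a" where
  "sinv A d c m s = (THE u. u \<in> A \<and> d s = c u \<and> d u = c s \<and> m (m s u) s = s \<and> m (m u s) u = u)"

definition idem :: "'a set \<Rightarrow> ('a \<Rightarrow> 'o) \<Rightarrow> ('a \<Rightarrow> 'o) \<Rightarrow> ('a \<Rightarrow> 'a \<Rightarrow> 'a) \<Rightarrow> 'a \<Rightarrow> bool" where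
  "idem A d c m e \<longleftrightarrow> e \<in> A \<and> d e = c e \<and> m e e = e"

definition nleq :: "'a set \<Rightarrow> ('a \<Rightarrow> 'o) \<Rightarrow> ('a \<Rightarrow> 'o) \<Rightarrow> ('a \<Rightarrow> 'a \<Rightarrow> 'a) \<Rightarrow> 'a \<Rightarrow> 'a \<Rightarrow> bool" where
  "nleq A d c m s t \<longleftrightarrow> s \<in> A \<and> t \<in> A \<and> d s = d t \<and> c s = c t \<and>
     (\<exists>e. idem A d c m e \<and> d t = c e \<and> s = m t e)"

definition sigma :: "'a set \<Rightarrow> ('a \<Rightarrow> 'o) \<Rightarrow> ('a \<Rightarrow> 'o) \<Rightarrow> ('a \<Rightarrow> 'a \<Rightarrow> 'a) \<Rightarrow> 'a \<Rightarrow> 'a \<Rightarrow> bool" where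
  "sigma A d c m s t \<longleftrightarrow> (\<exists>r. nleq A d c m r s \<and> nleq A d c m r t)"

definition E_unitary :: "'a set \<Rightarrow> ('a \<Rightarrow> 'o) \<Rightarrow> ('a \<Rightarrow> 'o) \<Rightarrow> ('a \<Rightarrow> 'a \<Rightarrow> 'a) \<Rightarrow> bool" where
  "E_unitary A d c m \<longleftrightarrow>
     (\<forall>s\<in>A. \<forall>e. idem A d c m e \<and> sigma A d c m s e \<longrightarrow> idem A d c m s)"

definition sclass :: "'a set \<Rightarrow> ('a \<Rightarrow> 'o) \<Rightarrow> ('a \<Rightarrow> 'o) \<Rightarrow> ('a \<Rightarrow> 'a \<Rightarrow> 'a) \<Rightarrow> 'a \<Rightarrow> 'a set" where
  "sclass A d c m s = {t. sigma A d c m s t}"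

definition q_arrows :: "'a set \<Rightarrow> ('a \<Rightarrow> 'o) \<Rightarrow> ('a \<Rightarrow> 'o) \<Rightarrow> ('a \<Rightarrow> 'a \<Rightarrow> 'a) \<Rightarrow> 'a set set" where
  "q_arrows A d c m = sclass A d c m ` A"

definition q_d :: "('a \<Rightarrow> 'o) \<Rightarrow> 'a set \<Rightarrow> 'o" where
  "q_d d P = d (SOME s. s \<in> P)"

definition q_mult :: "'a set \<Rightarrow> ('a \<Rightarrow> 'o) \<Rightarrow> ('a \<Rightarrow> 'o) \<Rightarrow> ('a \<Rightarrow> 'a \<Rightarrow> 'a) \<Rightarrow> 'a set \<Rightarrow> 'a set \<Rightarrow> 'a set" where
  "q_mult A d c m P Q = sclass A d c m (m (SOME s. s \<in> P) (SOME t. t \<in> Q))"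

definition q_inv :: "'a set \<Rightarrow> ('a \<Rightarrow> 'o) \<Rightarrow> ('a \<Rightarrow> 'o) \<Rightarrow> ('a \<Rightarrow> 'a \<Rightarrow> 'a) \<Rightarrow> 'a set \<Rightarrow> 'a set" where
  "q_inv A d c m P = sclass A d c m (sinv A d c m (SOME s. s \<in> P))"

text \<open>Partial action of a semigroupoid (arrows A, maps d c, product m, inverse map iv;
the natural order is derived from m) on a set X. Xs s is the set X_s, th s is theta_s.\<close>

definition partial_action ::
  "'a set \<Rightarrow> ('a \<Rightarrow> 'o) \<Rightarrow> ('a \<Rightarrow> 'o) \<Rightarrow> ('a \<Rightarrow> 'a \<Rightarrow> 'a) \<Rightarrow> ('a \<Rightarrow> 'a) \<Rightarrow>
   'x set \<Rightarrow> ('a \<Rightarrow> 'x set) \<Rightarrow> ('a \<Rightarrow> 'x \<Rightarrow> 'x) \<Rightarrow> bool" where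
  "partial_action A d c m iv X Xs th \<longleftrightarrow>
     (\<forall>s\<in>A. Xs s \<subseteq> X \<and> bij_betw (th s) (Xs (iv s)) (Xs s)) \<and>
     (\<forall>s\<in>A. (\<forall>x\<in>Xs (iv s). th (iv s) (th s x) = x) \<and> (\<forall>x\<in>Xs s. th s (th (iv s) x) = x)) \<and>
     X = (\<Union>s\<in>A. Xs s) \<and>
     (\<forall>s\<in>A. \<forall>t\<in>A. d s = c t \<longrightarrow>
        (\<forall>x. x \<in> Xs (iv t) \<and> th t x \<in> Xs (iv s) \<longrightarrow>
              x \<in> Xs (iv (m s t)) \<and> th (m s t) x = th s (th t x))) \<and>
     (\<forall>s t. nleq A d c m s t \<longrightarrow> Xs s \<subseteq> Xs t)"

definition global_action ::
  "'a set \<Rightarrow> ('a \<Rightarrow> 'o) \<Rightarrow> ('a \<Rightarrow> 'o) \<Rightarrow> ('a \<Rightarrow> 'a \<Rightarrow> 'a) \<Rightarrow> ('a \<Rightarrow> 'a) \<Rightarrow>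
   'x set \<Rightarrow> ('a \<Rightarrow> 'x set) \<Rightarrow> ('a \<Rightarrow> 'x \<Rightarrow> 'x) \<Rightarrow> bool" where
  "global_action A d c m iv X Xs th \<longleftrightarrow>
     partial_action A d c m iv X Xs th \<and>
     (\<forall>s\<in>A. \<forall>t\<in>A. d s = c t \<longrightarrow>
        (\<forall>x. x \<in> Xs (iv (m s t)) \<longleftrightarrow> x \<in> Xs (iv t) \<and> th t x \<in> Xs (iv s)))"

definition order_ideal :: "'x::order set \<Rightarrow> 'x set \<Rightarrow> bool" where
  "order_ideal X Y \<longleftrightarrow> Y \<subseteq> X \<and> (\<forall>y\<in>Y. \<forall>x\<in>X. x \<le> y \<longrightarrow> x \<in> Y)"

definition order_iso_on :: "('x::order \<Rightarrow> 'x) \<Rightarrow> 'x set \<Rightarrow> 'x set \<Rightarrow> bool" where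
  "order_iso_on f Y Z \<longleftrightarrow> bij_betw f Y Z \<and> (\<forall>x\<in>Y. \<forall>y\<in>Y. x \<le> y \<longleftrightarrow> f x \<le> f y)"

definition ordered_action ::
  "'a set \<Rightarrow> ('a \<Rightarrow> 'a) \<Rightarrow> 'x::order set \<Rightarrow> ('a \<Rightarrow> 'x set) \<Rightarrow> ('a \<Rightarrow> 'x \<Rightarrow> 'x) \<Rightarrow> bool" where
  "ordered_action A iv X Xs th \<longleftrightarrow>
     (\<forall>s\<in>A. order_ideal X (Xs s) \<and> order_iso_on (th s) (Xs (iv s)) (Xs s))"

definition alphaD :: "('a \<Rightarrow> 'x set) \<Rightarrow> 'a set \<Rightarrow> 'x set" where
  "alphaD Xs P = (\<Union>t\<in>P. Xs t)"

definition alphaMap :: "'a set \<Rightarrow> ('a \<Rightarrow> 'o) \<Rightarrow> ('a \<Rightarrow> 'o) \<Rightarrow> ('a \<Rightarrow> 'a \<Rightarrow> 'a) \<Rightarrow>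
    ('a \<Rightarrow> 'x set) \<Rightarrow> ('a \<Rightarrow> 'x \<Rightarrow> 'x) \<Rightarrow> 'a set \<Rightarrow> 'x \<Rightarrow> 'x" where
  "alphaMap A d c m Xs th P x = th (SOME t. t \<in> P \<and> x \<in> Xs (sinv A d c m t)) x"

end

theory Submission
  imports Defs
begin

text \<open>In an E-unitary inverse semigroupoid, \<open>s \<sigma> t\<close> forces \<open>s\<^sup>* t\<close> to be idempotent, and since \<open>\<sigma>\<close> is
  a congruence compatible with inverses, so is \<open>s t\<^sup>*\<close>. In a global action idempotents act as
  identities, which makes \<open>\<theta>\<^sub>s\<close> and \<open>\<theta>\<^sub>t\<close> agree on \<open>X\<^sub>s\<^sub>* \<inter> X\<^sub>t\<^sub>*\<close>. So the partial bijections
  \<open>\<theta>\<^sub>t\<close>, \<open>t \<in> \<pi>\<^sub>\<sigma>(s)\<close>, glue to a bijection \<open>\<alpha>\<^bsub>\<pi>\<^sub>\<sigma>(s)\<^esub>\<close> from \<open>D\<^bsub>\<pi>\<^sub>\<sigma>(s\<^sup>*)\<^esub>\<close> onto \<open>D\<^bsub>\<pi>\<^sub>\<sigma>(s)\<^esub>\<close>;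
  the axioms of an ordered partial action of \<open>S/\<sigma>\<close> are then inherited representative-wise from
  those of \<theta>.\<close>

locale inverse_semigroupoid =
  fixes S :: "'a set" and S0 :: "'o set" and d c :: "'a \<Rightarrow> 'o" and m :: "'a \<Rightarrow> 'a \<Rightarrow> 'a"
  assumes inv_semigroupoid: "inv_semigroupoid S S0 d c m"
begin

abbreviation iv :: "'a \<Rightarrow> 'a" where "iv \<equiv> sinv S d c m"
abbreviation idm :: "'a \<Rightarrow> bool" where "idm \<equiv> idem S d c m"
abbreviation nle :: "'a \<Rightarrow> 'a \<Rightarrow> bool" (infix "\<preceq>" 50) where "s \<preceq> t \<equiv> nleq S d c m s t"
abbreviation sim :: "'a \<Rightarrow> 'a \<Rightarrow> bool" (infix "\<sim>" 50) where "s \<sim> t \<equiv> sigma S d c m s t"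

lemma mult_closed [simp]: "s \<in> S \<Longrightarrow> t \<in> S \<Longrightarrow> d s = c t \<Longrightarrow> m s t \<in> S"
  and dom_mult [simp]: "s \<in> S \<Longrightarrow> t \<in> S \<Longrightarrow> d s = c t \<Longrightarrow> d (m s t) = d t"
  and cod_mult [simp]: "s \<in> S \<Longrightarrow> t \<in> S \<Longrightarrow> d s = c t \<Longrightarrow> c (m s t) = c s"
  and mult_assoc [simp]: "r \<in> S \<Longrightarrow> s \<in> S \<Longrightarrow> t \<in> S \<Longrightarrow> d r = c s \<Longrightarrow> d s = c t \<Longrightarrow>
    m (m r s) t = m r (m s t)"
  using inv_semigroupoid unfolding inv_semigroupoid_def by blast+

lemma ex1_sinv:
  "s \<in> S \<Longrightarrow> \<exists>!u. u \<in> S \<and> d s = c u \<and> d u = c s \<and> m (m s u) s = s \<and> m (m u s) u = u"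
  using inv_semigroupoid unfolding inv_semigroupoid_def by blast

lemma sinv_spec:
  assumes "s \<in> S"
  shows "iv s \<in> S \<and> d s = c (iv s) \<and> d (iv s) = c s \<and> m (m s (iv s)) s = s \<and> m (m (iv s) s) (iv s) = iv s"
  unfolding sinv_def by (rule theI'[OF ex1_sinv[OF assms]])

lemma sinv_unique:
  assumes "s \<in> S" "u \<in> S" "d s = c u" "d u = c s" "m (m s u) s = s" "m (m u s) u = u"
  shows "u = iv s"
  unfolding sinv_def by (rule sym, rule the1_equality[OF ex1_sinv]) (use assms in blast)+

lemma inv_closed [simp]: "s \<in> S \<Longrightarrow> iv s \<in> S"
  and cod_inv [simp]: "s \<in> S \<Longrightarrow> c (iv s) = d s"
  and dom_inv [simp]: "s \<in> S \<Longrightarrow> d (iv s) = c s"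
  using sinv_spec by metis+

lemma mult_inv_mult [simp]: "s \<in> S \<Longrightarrow> m s (m (iv s) s) = s"
  and inv_mult_inv [simp]: "s \<in> S \<Longrightarrow> m (iv s) (m s (iv s)) = iv s"
  using sinv_spec[of s] by (metis mult_assoc)+

lemma mult_inv_mult_left [simp]:
  assumes "s \<in> S" "x \<in> S" "d s = c x"
  shows "m s (m (iv s) (m s x)) = m s x"
proof -
  have "m s (m (iv s) (m s x)) = m (m s (m (iv s) s)) x" using assms by (simp del: mult_inv_mult)
  then show ?thesis using assms by simp
qed

lemma inv_mult_inv_left [simp]:
  assumes "s \<in> S" "x \<in> S" "c s = c x"
  shows "m (iv s) (m s (m (iv s) x)) = m (iv s) x"
proof -
  have "m (iv s) (m s (m (iv s) x)) = m (m (iv s) (m s (iv s))) x" using assms by (simp del: inv_mult_inv)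
  then show ?thesis using assms by simp
qed

lemma inv_inv [simp]: "s \<in> S \<Longrightarrow> iv (iv s) = s"
  by (rule sym, rule sinv_unique) auto

lemma idem_iff: "idm e \<longleftrightarrow> e \<in> S \<and> d e = c e \<and> m e e = e"
  unfolding idem_def ..

lemma idemD: "idm e \<Longrightarrow> e \<in> S" "idm e \<Longrightarrow> d e = c e" "idm e \<Longrightarrow> m e e = e"
  by (simp_all add: idem_iff)

lemma idem_mult_idem_left [simp]: "idm e \<Longrightarrow> z \<in> S \<Longrightarrow> d e = c z \<Longrightarrow> m e (m e z) = m e z"
  by (metis idemD mult_assoc)

lemma inv_idem: "idm e \<Longrightarrow> iv e = e"
  by (rule sym, rule sinv_unique) (auto simp: idemD)

lemma idem_inv_mult_self: "s \<in> S \<Longrightarrow> idm (m (iv s) s)"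
  and idem_mult_inv_self: "s \<in> S \<Longrightarrow> idm (m s (iv s))"
  by (auto simp: idem_iff)

text \<open>The inverse \<open>x = (e f)\<^sup>*\<close> coincides with \<open>f x e\<close>, which is idempotent; hence so is
  \<open>e f = x\<^sup>*\<close>.\<close>

lemma idem_mult:
  assumes e: "idm e" and f: "idm f" and ef: "d e = c f"
  shows "idm (m e f)"
proof -
  note E = idemD[OF e] and F = idemD[OF f]
  define x where "x = iv (m e f)"
  have efS: "m e f \<in> S" using E F ef by simp
  have xS: "x \<in> S" and dx: "d x = c e" "c x = d f" using efS E F ef x_def by auto
  define y where "y = m f (m x e)"
  have yS: "y \<in> S" and dy: "d y = d e" "c y = c f"
    unfolding y_def using xS dx E F ef by auto
  have h1: "m (m x (m e f)) x = x" "m (m (m e f) x) (m e f) = m e f"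
    using sinv_spec[OF efS] unfolding x_def by blast+
  have xefx: "m x (m e (m f x)) = x" using E F ef dx xS h1(1) by simp
  have xefx': "m x (m e (m f (m x e))) = m x e"
  proof -
    have "m x (m e (m f (m x e))) = m (m x (m e (m f x))) e" using xS E F ef dx by simp
    then show ?thesis using xefx by simp
  qed
  have efxef: "m e (m f (m x (m e f))) = m e f" using E F ef dx xS h1(2) by simp
  have yy: "m y y = y"
  proof -
    have "m y y = m f (m (m x (m e (m f x))) e)" unfolding y_def using xS E F dx ef by simp
    then show ?thesis using xefx y_def by simp
  qed
  have "y = x" unfolding x_def
  proof (rule sinv_unique)
    show "m (m (m e f) y) (m e f) = m e f" unfolding y_def using xS dx e f E F ef efxef by simp
    show "m (m y (m e f)) y = y" unfolding y_def using xS dx e f E F ef xefx' by simp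
  qed (use yS efS dy ef E F in auto)
  then have "idm x" using yy xS dx E F ef by (auto simp: idem_iff)
  moreover have "m e f = iv x" using x_def efS by simp
  ultimately show ?thesis using inv_idem by simp
qed

lemma idem_commute:
  assumes e: "idm e" and f: "idm f" and ef: "d e = c f"
  shows "m e f = m f e"
proof -
  note E = idemD[OF e] and F = idemD[OF f]
  have ef_idem: "idm (m e f)" and fe_idem: "idm (m f e)" using idem_mult e f E F ef by auto
  have "m e (m f (m e f)) = m e f"
    using idemD(3)[OF ef_idem] E F ef by simp
  moreover have "m f (m e (m f e)) = m f e"
    using idemD(3)[OF fe_idem] E F ef by simp
  ultimately have "m f e = iv (m e f)"
    by (intro sinv_unique) (use e f E F ef in auto)
  then show ?thesis using inv_idem ef_idem by simp
qed

lemma idem_commute_left: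
  assumes a: "idm a" and b: "idm b" and ab: "d a = c b" and z: "z \<in> S" "d b = c z"
  shows "m a (m b z) = m b (m a z)"
proof -
  note A = idemD[OF a] and B = idemD[OF b]
  have "m (m a b) z = m (m b a) z" using idem_commute[OF a b ab] by simp
  then show ?thesis using A B ab z by simp
qed

lemma inv_mult:
  assumes s: "s \<in> S" and t: "t \<in> S" and st: "d s = c t"
  shows "iv (m s t) = m (iv t) (iv s)"
proof (rule sym, rule sinv_unique)
  have "m (m t (iv t)) (m (m (iv s) s) t) = m (m (iv s) s) (m (m t (iv t)) t)"
    by (rule idem_commute_left) (use s t st idem_inv_mult_self idem_mult_inv_self in auto)
  then have "m t (m (iv t) (m (iv s) (m s t))) = m (iv s) (m s t)" using s t st by simp
  then show "m (m (m s t) (m (iv t) (iv s))) (m s t) = m s t" using s t st by simp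
  have "m (m (iv s) s) (m (m t (iv t)) (iv s)) = m (m t (iv t)) (m (m (iv s) s) (iv s))"
    by (rule idem_commute_left) (use s t st idem_inv_mult_self idem_mult_inv_self in auto)
  then have "m (iv s) (m s (m t (m (iv t) (iv s)))) = m t (m (iv t) (iv s))" using s t st by simp
  then show "m (m (m (iv t) (iv s)) (m s t)) (m (iv t) (iv s)) = m (iv t) (iv s)" using s t st by simp
qed (use s t st in auto)

lemma idem_shift:
  assumes f: "idm f" and x: "x \<in> S" and fx: "d f = c x"
  shows "m f x = m x (m (iv x) (m f x))" and "idm (m (iv x) (m f x))"
proof -
  note F = idemD[OF f]
  have "m (m x (iv x)) (m f x) = m f (m (m x (iv x)) x)"
    by (rule idem_commute_left) (use f x fx F idem_mult_inv_self in auto)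
  then show shift: "m f x = m x (m (iv x) (m f x))" using f x fx F by simp
  have "m (m (iv x) (m f x)) (m (iv x) (m f x)) = m (iv x) (m f (m x (m (iv x) (m f x))))"
    using x F fx by simp
  also have "\<dots> = m (iv x) (m f x)" using shift[symmetric] x F fx f by simp
  finally show "idm (m (iv x) (m f x))" using x F fx by (simp add: idem_iff)
qed

section \<open>The natural order and the congruence \<open>\<sigma>\<close>\<close>

lemma nle_iff:
  "s \<preceq> t \<longleftrightarrow> s \<in> S \<and> t \<in> S \<and> d s = d t \<and> c s = c t \<and> (\<exists>e. idm e \<and> d t = c e \<and> s = m t e)"
  unfolding nleq_def ..

lemma mult_idem_nle: "s \<in> S \<Longrightarrow> idm e \<Longrightarrow> d s = c e \<Longrightarrow> m s e \<preceq> s"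
  unfolding nle_iff using idemD by fastforce

lemma idem_mult_nle:
  assumes "idm f" "x \<in> S" "d f = c x"
  shows "m f x \<preceq> x"
proof -
  have "m x (m (iv x) (m f x)) \<preceq> x"
    using idem_shift(2)[OF assms] assms idemD[OF assms(1)] by (intro mult_idem_nle) auto
  then show ?thesis using idem_shift(1)[OF assms] by simp
qed

lemma nle_refl: "s \<in> S \<Longrightarrow> s \<preceq> s"
  using mult_idem_nle[OF _ idem_inv_mult_self] by fastforce

lemma nleE:
  assumes "r \<preceq> s"
  obtains e where "idm e" "d s = c e" "r = m s e"
  using assms unfolding nle_iff by blast

lemma nle_trans:
  assumes "r \<preceq> s" "s \<preceq> t"
  shows "r \<preceq> t"
proof -
  obtain e where e: "idm e" "d s = c e" "r = m s e" using assms(1) by (rule nleE)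
  obtain f where f: "idm f" "d t = c f" "s = m t f" using assms(2) by (rule nleE)
  have t: "t \<in> S" using assms(2) unfolding nle_iff by blast
  note E = idemD[OF e(1)] and F = idemD[OF f(1)]
  have fe: "d f = c e" using e(2) f(2,3) t F by simp
  have "m t (m f e) \<preceq> t" using e(1) f t E F fe by (intro mult_idem_nle idem_mult) auto
  then show ?thesis using e(3) f(2,3) t E F fe by simp
qed

lemma nle_inv:
  assumes "r \<preceq> s"
  shows "iv r \<preceq> iv s"
proof -
  obtain e where e: "idm e" "d s = c e" "r = m s e" using assms by (rule nleE)
  have s: "s \<in> S" using assms unfolding nle_iff by blast
  note E = idemD[OF e(1)]
  have "iv r = m e (iv s)" using e s E inv_mult inv_idem by simp
  also have "\<dots> = m (iv s) (m s (m e (iv s)))" using idem_shift(1)[of e "iv s"] e s E by simp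
  also have "\<dots> \<preceq> iv s"
    using idem_shift(2)[of e "iv s"] e s E by (intro mult_idem_nle) auto
  finally show ?thesis .
qed

lemma nle_mult:
  assumes "r \<preceq> s" "r' \<preceq> u" "d s = c u"
  shows "m r r' \<preceq> m s u"
proof -
  obtain e where e: "idm e" "d s = c e" "r = m s e" using assms(1) by (rule nleE)
  obtain f where f: "idm f" "d u = c f" "r' = m u f" using assms(2) by (rule nleE)
  have s: "s \<in> S" and u: "u \<in> S" using assms unfolding nle_iff by auto
  note E = idemD[OF e(1)] and F = idemD[OF f(1)]
  define g where "g = m (iv u) (m e u)"
  have eu: "d e = c u" using E e(2) assms(3) by simp
  have g: "m e u = m u g" "idm g" unfolding g_def using idem_shift[OF e(1) u eu] .
  note G = idemD[OF g(2)]
  have dg: "c g = d u" "d g = d u" unfolding g_def using u e(1) eu E by simp_all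
  have "m r r' = m s (m (m e u) f)" using e f s u assms(3) E F by simp
  also have "\<dots> = m s (m (m u g) f)" by (simp only: g(1))
  also have "\<dots> = m (m s u) (m g f)" using f s u assms(3) F G dg by simp
  also have "\<dots> \<preceq> m s u"
    using g(2) f(1) s u assms(3) G F dg f(2) by (intro mult_idem_nle idem_mult) auto
  finally show ?thesis .
qed

lemma sim_refl: "s \<in> S \<Longrightarrow> s \<sim> s"
  unfolding sigma_def using nle_refl by blast

lemma sim_sym: "s \<sim> t \<Longrightarrow> t \<sim> s"
  unfolding sigma_def by blast

lemma nle_imp_sim: "r \<preceq> s \<Longrightarrow> r \<sim> s"
  unfolding sigma_def using nle_refl nle_iff by blast

lemma sim_parallel: "s \<sim> t \<Longrightarrow> s \<in> S \<and> t \<in> S \<and> d s = d t \<and> c s = c t"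
  unfolding sigma_def nle_iff by metis

text \<open>A common lower bound of \<open>r = t e\<close> and \<open>r' = t f\<close> is \<open>t e f = r f = r' e\<close>.\<close>

lemma sim_trans:
  assumes "s \<sim> t" "t \<sim> u"
  shows "s \<sim> u"
proof -
  obtain r r' where r: "r \<preceq> s" "r \<preceq> t" and r': "r' \<preceq> t" "r' \<preceq> u"
    using assms unfolding sigma_def by blast
  obtain e where e: "idm e" "d t = c e" "r = m t e" using r(2) by (rule nleE)
  obtain f where f: "idm f" "d t = c f" "r' = m t f" using r'(1) by (rule nleE)
  have t: "t \<in> S" using r(2) unfolding nle_iff by blast
  note E = idemD[OF e(1)] and F = idemD[OF f(1)]
  have "m r f \<preceq> r" using e f t E F by (intro mult_idem_nle) auto
  moreover have "m r f = m r' e" using e f t E F idem_commute[OF e(1) f(1)] by simp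
  moreover have "m r' e \<preceq> r'" using e f t E F by (intro mult_idem_nle) auto
  ultimately show ?thesis unfolding sigma_def using r r' nle_trans by metis
qed

lemma sim_inv: "s \<sim> t \<Longrightarrow> iv s \<sim> iv t"
  unfolding sigma_def using nle_inv by blast

lemma sim_mult:
  assumes "s \<sim> t" "u \<sim> v" "d s = c u"
  shows "m s u \<sim> m t v"
proof -
  obtain r r' where r: "r \<preceq> s" "r \<preceq> t" and r': "r' \<preceq> u" "r' \<preceq> v"
    using assms unfolding sigma_def by blast
  have "d t = c v" using assms sim_parallel by metis
  then show ?thesis unfolding sigma_def using nle_mult r r' assms(3) by blast
qed

section \<open>The quotient \<open>S/\<sigma>\<close>\<close>

abbreviation \<pi> :: "'a \<Rightarrow> 'a set" where "\<pi> \<equiv> sclass S d c m"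

lemma mem_sclass_iff: "t \<in> \<pi> s \<longleftrightarrow> s \<sim> t"
  unfolding sclass_def by simp

lemma sclass_eq: "s \<sim> t \<Longrightarrow> \<pi> s = \<pi> t"
  unfolding sclass_def using sim_trans sim_sym by blast

lemma sim_some_sclass: "s \<in> S \<Longrightarrow> s \<sim> (SOME t. t \<in> \<pi> s)"
  using someI[of "\<lambda>t. t \<in> \<pi> s" s] sim_refl mem_sclass_iff by blast

lemma q_arrows_iff: "P \<in> q_arrows S d c m \<longleftrightarrow> (\<exists>s\<in>S. P = \<pi> s)"
  unfolding q_arrows_def by blast

lemma q_d_sclass: "s \<in> S \<Longrightarrow> q_d d (\<pi> s) = d s"
  and q_c_sclass: "s \<in> S \<Longrightarrow> q_d c (\<pi> s) = c s"
  unfolding q_d_def using sim_some_sclass sim_parallel by metis+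

lemma q_inv_sclass: "s \<in> S \<Longrightarrow> q_inv S d c m (\<pi> s) = \<pi> (iv s)"
  unfolding q_inv_def using sim_some_sclass sim_inv sclass_eq sim_sym by metis

lemma q_mult_sclass:
  assumes "s \<in> S" "t \<in> S" "d s = c t"
  shows "q_mult S d c m (\<pi> s) (\<pi> t) = \<pi> (m s t)"
proof -
  have "m s t \<sim> m (SOME x. x \<in> \<pi> s) (SOME x. x \<in> \<pi> t)"
    using sim_mult sim_some_sclass assms by blast
  then show ?thesis unfolding q_mult_def using sclass_eq sim_sym by metis
qed

lemma sim_square_if_q_idem:
  assumes "e \<in> S" "idem (q_arrows S d c m) (q_d d) (q_d c) (q_mult S d c m) (\<pi> e)"
  shows "d e = c e" and "e \<sim> m e e"
proof -
  show de: "d e = c e" using assms q_d_sclass q_c_sclass unfolding idem_def by simp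
  have "\<pi> (m e e) = \<pi> e" using assms q_mult_sclass de unfolding idem_def by simp
  then show "e \<sim> m e e" using mem_sclass_iff sim_refl assms(1) de by (metis mult_closed)
qed

end

locale E_unitary_inverse_semigroupoid = inverse_semigroupoid +
  assumes E_unitary: "E_unitary S d c m"
begin

lemma idem_if_nle_idem:
  assumes "idm e" "e \<preceq> s"
  shows "idm s"
proof -
  have "s \<in> S" using assms(2) unfolding nle_iff by blast
  moreover have "s \<sim> e" using nle_imp_sim[OF assms(2)] sim_sym by blast
  ultimately show ?thesis using E_unitary assms(1) unfolding E_unitary_def by blast
qed

lemma idem_inv_mult_if_sim:
  assumes "s \<sim> t"
  shows "idm (m (iv s) t)"
proof -
  obtain r where r: "r \<preceq> s" "r \<preceq> t" using assms unfolding sigma_def by blast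
  obtain e where e: "idm e" "d s = c e" "r = m s e" using r(1) by (rule nleE)
  obtain f where f: "idm f" "d t = c f" "r = m t f" using r(2) by (rule nleE)
  have st: "s \<in> S" "t \<in> S" "d s = d t" "c s = c t" using assms sim_parallel by auto
  note E = idemD[OF e(1)] and F = idemD[OF f(1)]
  have "m t f = m s e" using e(3) f(3) by simp
  then have "m (m (iv s) t) f = m (m (iv s) s) e" using st E F e(2) f(2) by simp
  moreover have "idm (m (m (iv s) s) e)"
    using e st E idem_inv_mult_self by (intro idem_mult[of "m (iv s) s" e]) auto
  moreover have "m (m (iv s) t) f \<preceq> m (iv s) t" using f st F by (intro mult_idem_nle) auto
  ultimately show ?thesis using idem_if_nle_idem by metis
qed

text \<open>By E-unitarity an idempotent of \<open>S/\<sigma>\<close> is the class of an idempotent, so the natural order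
  of \<open>S/\<sigma>\<close> is trivial.\<close>

lemma q_nle_imp_eq:
  assumes "nleq (q_arrows S d c m) (q_d d) (q_d c) (q_mult S d c m) P R"
  shows "P = R"
proof -
  obtain E where R: "R \<in> q_arrows S d c m" and E: "idem (q_arrows S d c m) (q_d d) (q_d c) (q_mult S d c m) E"
    and dRE: "q_d d R = q_d c E" and P: "P = q_mult S d c m R E"
    using assms unfolding nleq_def by blast
  obtain r where r: "r \<in> S" "R = \<pi> r" using R q_arrows_iff by blast
  obtain e where e: "e \<in> S" "E = \<pi> e" using E q_arrows_iff unfolding idem_def by blast
  have de: "d e = c e" and ee: "e \<sim> m e e" using sim_square_if_q_idem e E by auto
  have "idm (m (iv e) (m e e))" using idem_inv_mult_if_sim[OF ee] .
  moreover have "m (iv e) (m e e) \<preceq> e"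
    using idem_mult_nle[OF idem_inv_mult_self[OF e(1)] e(1)] e(1) de by simp
  ultimately have "idm e" by (rule idem_if_nle_idem)
  moreover have dr: "d r = c e" using dRE r e q_d_sclass q_c_sclass by simp
  ultimately have "m r e \<sim> r" using r(1) by (intro nle_imp_sim mult_idem_nle)
  then show ?thesis using P r e dr q_mult_sclass sclass_eq by simp
qed

end

section \<open>Global actions\<close>

locale inverse_semigroupoid_global_action = inverse_semigroupoid +
  fixes X :: "'x set" and Xs :: "'a \<Rightarrow> 'x set" and th :: "'a \<Rightarrow> 'x \<Rightarrow> 'x"
  assumes global_action: "global_action S d c m (sinv S d c m) X Xs th"
begin

lemma partial_action_theta: "partial_action S d c m iv X Xs th"
  using global_action unfolding global_action_def by blast

lemma Xs_subset: "s \<in> S \<Longrightarrow> Xs s \<subseteq> X"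
  and theta_bij_betw: "s \<in> S \<Longrightarrow> bij_betw (th s) (Xs (iv s)) (Xs s)"
  and theta_inv_theta: "s \<in> S \<Longrightarrow> x \<in> Xs (iv s) \<Longrightarrow> th (iv s) (th s x) = x"
  and theta_theta_inv: "s \<in> S \<Longrightarrow> x \<in> Xs s \<Longrightarrow> th s (th (iv s) x) = x"
  and X_eq_Union: "X = (\<Union>s\<in>S. Xs s)"
  and theta_mult: "s \<in> S \<Longrightarrow> t \<in> S \<Longrightarrow> d s = c t \<Longrightarrow> x \<in> Xs (iv t) \<Longrightarrow> th t x \<in> Xs (iv s) \<Longrightarrow>
    x \<in> Xs (iv (m s t)) \<and> th (m s t) x = th s (th t x)"
  using partial_action_theta unfolding partial_action_def by blast+

lemma Xs_inv_mult_iff: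
  "s \<in> S \<Longrightarrow> t \<in> S \<Longrightarrow> d s = c t \<Longrightarrow> x \<in> Xs (iv (m s t)) \<longleftrightarrow> x \<in> Xs (iv t) \<and> th t x \<in> Xs (iv s)"
  using global_action unfolding global_action_def by blast

lemma theta_in: "s \<in> S \<Longrightarrow> x \<in> Xs (iv s) \<Longrightarrow> th s x \<in> Xs s"
  using theta_bij_betw bij_betw_apply by metis

lemma theta_idem:
  assumes e: "idm e" and x: "x \<in> Xs e"
  shows "th e x = x"
proof -
  note E = idemD[OF e] and inv_e = inv_idem[OF e]
  have "th e x \<in> Xs (iv e)" using theta_in E x inv_e by simp
  then have "th e (th e x) = th e x" using theta_mult[of e e x] E x inv_e by simp
  moreover have "inj_on (th e) (Xs (iv e))" using theta_bij_betw E bij_betw_def by blast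
  ultimately show ?thesis using x \<open>th e x \<in> Xs (iv e)\<close> inv_e unfolding inj_on_def by metis
qed

lemma Xs_inv_eq_Xs_inv_mult_self: "s \<in> S \<Longrightarrow> Xs (iv s) = Xs (m (iv s) s)"
  using Xs_inv_mult_iff[of "iv s" s] theta_in inv_idem[OF idem_inv_mult_self] by auto

lemma Xs_idem_mult:
  assumes e: "idm e" and f: "idm f" and ef: "d e = c f"
  shows "Xs (m e f) = Xs e \<inter> Xs f"
  using Xs_inv_mult_iff[of e f] theta_idem[OF f] inv_idem[OF idem_mult[OF assms]]
    inv_idem[OF e] inv_idem[OF f] idemD[OF e] idemD[OF f] ef by auto

end

locale E_unitary_global_action = inverse_semigroupoid_global_action + E_unitary_inverse_semigroupoid
begin

text \<open>With \<open>s\<^sup>* t\<close> and \<open>s t\<^sup>*\<close> idempotent, \<open>s\<^sup>*s t\<^sup>*t = s\<^sup>*(t s\<^sup>*)t = s\<^sup>*t\<close>, so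
  \<open>X\<^sub>s\<^sub>* \<inter> X\<^sub>t\<^sub>* = X\<^sub>s\<^sub>*\<^sub>s \<inter> X\<^sub>t\<^sub>*\<^sub>t = X\<^sub>s\<^sub>*\<^sub>t\<close>, on which \<open>\<theta>\<^sub>s\<^sub>*\<^sub>t = \<theta>\<^sub>s\<^sub>* \<circ> \<theta>\<^sub>t\<close> is the identity.\<close>

lemma theta_eq_if_sim:
  assumes st: "s \<sim> t" and xs: "x \<in> Xs (iv s)" and xt: "x \<in> Xs (iv t)"
  shows "th s x = th t x"
proof -
  have s: "s \<in> S" and t: "t \<in> S" and dd: "d s = d t" and cc: "c s = c t"
    using sim_parallel[OF st] by auto
  have e: "idm (m (iv s) t)" using idem_inv_mult_if_sim[OF st] .
  have f: "idm (m s (iv t))" using idem_inv_mult_if_sim[OF sim_inv[OF st]] s by simp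
  have swap: "m s (iv t) = m t (iv s)" using inv_idem[OF f] inv_mult[of s "iv t"] s t dd by simp
  have "m (m (iv s) s) (m (iv t) t) = m (iv s) (m (m s (iv t)) t)" using s t dd cc by simp
  also have "\<dots> = m (iv s) (m (m t (iv s)) t)" by (simp only: swap)
  also have "\<dots> = m (m (iv s) t) (m (iv s) t)" using s t dd cc by simp
  also have "\<dots> = m (iv s) t" using idemD(3)[OF e] .
  finally have prod: "m (m (iv s) s) (m (iv t) t) = m (iv s) t" .
  have Xs_st: "Xs (m (iv s) t) = Xs (m (iv s) s) \<inter> Xs (m (iv t) t)"
    unfolding prod[symmetric] using s t dd by (intro Xs_idem_mult idem_inv_mult_self) simp_all
  have "x \<in> Xs (m (iv s) t)"
    using xs xt Xs_inv_eq_Xs_inv_mult_self[OF s] Xs_inv_eq_Xs_inv_mult_self[OF t] Xs_st by blast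
  then have xe: "x \<in> Xs (iv (m (iv s) t))" using inv_idem[OF e] by simp
  have g: "th t x \<in> Xs s" using Xs_inv_mult_iff[of "iv s" t x] xe s t cc by simp
  have "th (iv s) (th t x) = th (m (iv s) t) x" using theta_mult[of "iv s" t x] g xt s t cc by simp
  also have "\<dots> = x" using theta_idem[OF e] xe inv_idem[OF e] by simp
  finally have "th s x = th s (th (iv s) (th t x))" by simp
  also have "\<dots> = th t x" using theta_theta_inv[OF s g] .
  finally show ?thesis .
qed

section \<open>The induced partial action of \<open>S/\<sigma>\<close>\<close>

abbreviation D where "D \<equiv> alphaD Xs"
abbreviation \<alpha> where "\<alpha> \<equiv> alphaMap S d c m Xs th"

lemma mem_alphaD_sclass: "x \<in> D (\<pi> s) \<longleftrightarrow> (\<exists>t. s \<sim> t \<and> x \<in> Xs t)"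
  unfolding alphaD_def sclass_def by blast

lemma mem_alphaD_sclass_inv:
  assumes "s \<in> S"
  shows "x \<in> D (\<pi> (iv s)) \<longleftrightarrow> (\<exists>t. s \<sim> t \<and> x \<in> Xs (iv t))"
proof
  assume "x \<in> D (\<pi> (iv s))"
  then obtain v where v: "iv s \<sim> v" "x \<in> Xs v" unfolding mem_alphaD_sclass by blast
  then have "s \<sim> iv v" and "x \<in> Xs (iv (iv v))" using sim_inv[OF v(1)] assms sim_parallel by auto
  then show "\<exists>t. s \<sim> t \<and> x \<in> Xs (iv t)" by blast
next
  assume "\<exists>t. s \<sim> t \<and> x \<in> Xs (iv t)"
  then show "x \<in> D (\<pi> (iv s))" unfolding mem_alphaD_sclass using sim_inv by blast
qed

lemma alphaD_subset: "D (\<pi> s) \<subseteq> X"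
  using mem_alphaD_sclass sim_parallel Xs_subset by blast

lemma alphaMap_sclass:
  assumes st: "s \<sim> t" and x: "x \<in> Xs (iv t)"
  shows "\<alpha> (\<pi> s) x = th t x"
proof -
  define t' where "t' = (SOME t'. t' \<in> \<pi> s \<and> x \<in> Xs (iv t'))"
  have "t' \<in> \<pi> s \<and> x \<in> Xs (iv t')"
    unfolding t'_def by (rule someI[of _ t]) (use st x mem_sclass_iff in blast)
  then have "t' \<sim> t" "x \<in> Xs (iv t')" using st mem_sclass_iff sim_sym sim_trans by blast+
  then have "th t' x = th t x" using theta_eq_if_sim x by blast
  then show ?thesis unfolding alphaMap_def t'_def[symmetric] .
qed

lemma alphaMap_sclass_inv:
  assumes st: "s \<sim> t" and x: "x \<in> Xs t"
  shows "\<alpha> (\<pi> (iv s)) x = th (iv t) x"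
  using alphaMap_sclass[OF sim_inv[OF st]] x sim_parallel[OF st] by simp

lemma alphaMap_in_alphaD:
  assumes s: "s \<in> S" and x: "x \<in> D (\<pi> (iv s))"
  shows "\<alpha> (\<pi> s) x \<in> D (\<pi> s)"
proof -
  obtain t where t: "s \<sim> t" "x \<in> Xs (iv t)" using x mem_alphaD_sclass_inv[OF s] by blast
  then have "\<alpha> (\<pi> s) x \<in> Xs t" using alphaMap_sclass theta_in sim_parallel by metis
  then show ?thesis using mem_alphaD_sclass t(1) by blast
qed

lemma alphaMap_inv_alphaMap:
  assumes s: "s \<in> S" and x: "x \<in> D (\<pi> (iv s))"
  shows "\<alpha> (\<pi> (iv s)) (\<alpha> (\<pi> s) x) = x"
proof -
  obtain t where t: "s \<sim> t" "x \<in> Xs (iv t)" using x mem_alphaD_sclass_inv[OF s] by blast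
  have tS: "t \<in> S" using sim_parallel[OF t(1)] by blast
  have "\<alpha> (\<pi> s) x = th t x" using alphaMap_sclass t by blast
  moreover have "\<alpha> (\<pi> (iv s)) (th t x) = th (iv t) (th t x)"
    using alphaMap_sclass_inv t theta_in tS by blast
  ultimately show ?thesis using theta_inv_theta tS t(2) by simp
qed

lemma bij_betw_alphaMap:
  assumes s: "s \<in> S"
  shows "bij_betw (\<alpha> (\<pi> s)) (D (\<pi> (iv s))) (D (\<pi> s))"
proof (rule bij_betw_byWitness[where f' = "\<alpha> (\<pi> (iv s))"])
  show "\<forall>x\<in>D (\<pi> (iv s)). \<alpha> (\<pi> (iv s)) (\<alpha> (\<pi> s) x) = x"
    using alphaMap_inv_alphaMap s by blast
  show "\<forall>x\<in>D (\<pi> s). \<alpha> (\<pi> s) (\<alpha> (\<pi> (iv s)) x) = x"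
    using alphaMap_inv_alphaMap[of "iv s"] s by simp
  show "\<alpha> (\<pi> s) ` D (\<pi> (iv s)) \<subseteq> D (\<pi> s)"
    using alphaMap_in_alphaD s by blast
  show "\<alpha> (\<pi> (iv s)) ` D (\<pi> s) \<subseteq> D (\<pi> (iv s))"
    using alphaMap_in_alphaD[of "iv s"] s by auto
qed

lemma alphaMap_mult:
  assumes s: "s \<in> S" and r: "r \<in> S" and sr: "d s = c r"
    and x: "x \<in> D (\<pi> (iv r))" and rx: "\<alpha> (\<pi> r) x \<in> D (\<pi> (iv s))"
  shows "x \<in> D (\<pi> (iv (m s r))) \<and> \<alpha> (\<pi> (m s r)) x = \<alpha> (\<pi> s) (\<alpha> (\<pi> r) x)"
proof -
  obtain t where t: "r \<sim> t" "x \<in> Xs (iv t)" using x mem_alphaD_sclass_inv[OF r] by blast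
  have rx_eq: "\<alpha> (\<pi> r) x = th t x" using alphaMap_sclass t by blast
  obtain u where u: "s \<sim> u" "th t x \<in> Xs (iv u)" using rx rx_eq mem_alphaD_sclass_inv[OF s] by auto
  have tS: "t \<in> S" and uS: "u \<in> S" and ut: "d u = c t"
    using sim_parallel[OF t(1)] sim_parallel[OF u(1)] sr by auto
  have comp: "x \<in> Xs (iv (m u t)) \<and> th (m u t) x = th u (th t x)"
    using theta_mult[OF uS tS ut] t(2) u(2) by blast
  have ut_sim: "m s r \<sim> m u t" using sim_mult[OF u(1) t(1) sr] .
  show ?thesis
  proof
    show "x \<in> D (\<pi> (iv (m s r)))" using mem_alphaD_sclass_inv s r sr ut_sim comp by auto
    have "\<alpha> (\<pi> (m s r)) x = th (m u t) x" using alphaMap_sclass ut_sim comp by blast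
    also have "\<dots> = \<alpha> (\<pi> s) (\<alpha> (\<pi> r) x)" using comp alphaMap_sclass[OF u] rx_eq by simp
    finally show "\<alpha> (\<pi> (m s r)) x = \<alpha> (\<pi> s) (\<alpha> (\<pi> r) x)" .
  qed
qed

lemma partial_action_quotient:
  "partial_action (q_arrows S d c m) (q_d d) (q_d c) (q_mult S d c m) (q_inv S d c m) X D \<alpha>"
  unfolding partial_action_def
proof (intro conjI ballI allI impI)
  fix P assume "P \<in> q_arrows S d c m"
  then obtain s where s: "s \<in> S" "P = \<pi> s" using q_arrows_iff by blast
  then have inv_P: "q_inv S d c m P = \<pi> (iv s)" using q_inv_sclass by simp
  show "D P \<subseteq> X" using alphaD_subset s(2) by simp
  show "bij_betw (\<alpha> P) (D (q_inv S d c m P)) (D P)" using bij_betw_alphaMap[OF s(1)] inv_P s(2) by simp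
  fix x
  show "x \<in> D (q_inv S d c m P) \<Longrightarrow> \<alpha> (q_inv S d c m P) (\<alpha> P x) = x"
    using alphaMap_inv_alphaMap[OF s(1)] inv_P s(2) by simp
  show "x \<in> D P \<Longrightarrow> \<alpha> P (\<alpha> (q_inv S d c m P) x) = x"
    using alphaMap_inv_alphaMap[of "iv s"] s inv_P by simp
next
  show "X = (\<Union>P\<in>q_arrows S d c m. D P)"
  proof
    show "X \<subseteq> (\<Union>P\<in>q_arrows S d c m. D P)"
    proof
      fix x assume "x \<in> X"
      then obtain s where "s \<in> S" "x \<in> Xs s" using X_eq_Union by blast
      then have "\<pi> s \<in> q_arrows S d c m" and "x \<in> D (\<pi> s)"
        unfolding q_arrows_def mem_alphaD_sclass using sim_refl by blast+
      then show "x \<in> (\<Union>P\<in>q_arrows S d c m. D P)" by blast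
    qed
    show "(\<Union>P\<in>q_arrows S d c m. D P) \<subseteq> X"
      unfolding q_arrows_def using alphaD_subset by auto
  qed
next
  fix P R x
  assume P: "P \<in> q_arrows S d c m" and R: "R \<in> q_arrows S d c m" and PR: "q_d d P = q_d c R"
    and x: "x \<in> D (q_inv S d c m R) \<and> \<alpha> R x \<in> D (q_inv S d c m P)"
  obtain s where s: "s \<in> S" "P = \<pi> s" using P q_arrows_iff by blast
  obtain r where r: "r \<in> S" "R = \<pi> r" using R q_arrows_iff by blast
  have sr: "d s = c r" using PR s r q_d_sclass q_c_sclass by simp
  have "x \<in> D (q_inv S d c m (q_mult S d c m P R)) \<and> \<alpha> (q_mult S d c m P R) x = \<alpha> P (\<alpha> R x)"
    using alphaMap_mult[OF s(1) r(1) sr] x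
    unfolding s(2) r(2) q_mult_sclass[OF s(1) r(1) sr] q_inv_sclass[OF s(1)] q_inv_sclass[OF r(1)]
      q_inv_sclass[OF mult_closed[OF s(1) r(1) sr]] by blast
  then show "x \<in> D (q_inv S d c m (q_mult S d c m P R))"
    and "\<alpha> (q_mult S d c m P R) x = \<alpha> P (\<alpha> R x)" by blast+
next
  fix P R assume "nleq (q_arrows S d c m) (q_d d) (q_d c) (q_mult S d c m) P R"
  then have "P = R" by (rule q_nle_imp_eq)
  then show "D P \<subseteq> D R" by simp
qed

end

locale E_unitary_ordered_global_action = E_unitary_global_action S S0 d c m X Xs th
  for S :: "'a set" and S0 :: "'o set" and d c :: "'a \<Rightarrow> 'o" and m
    and X :: "'x::order set" and Xs th +
  assumes ordered_action: "ordered_action S (sinv S d c m) X Xs th"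
begin

lemma order_ideal_Xs: "s \<in> S \<Longrightarrow> order_ideal X (Xs s)"
  and order_iso_on_theta: "s \<in> S \<Longrightarrow> order_iso_on (th s) (Xs (iv s)) (Xs s)"
  using ordered_action unfolding ordered_action_def by blast+

lemma order_ideal_alphaD: "order_ideal X (D (\<pi> s))"
  unfolding order_ideal_def
proof (intro conjI ballI impI)
  show "D (\<pi> s) \<subseteq> X" by (rule alphaD_subset)
  fix y x assume y: "y \<in> D (\<pi> s)" and x: "x \<in> X" and xy: "x \<le> y"
  obtain t where t: "s \<sim> t" "y \<in> Xs t" using y mem_alphaD_sclass by blast
  have "x \<in> Xs t"
    using order_ideal_Xs[of t] t sim_parallel x xy unfolding order_ideal_def by blast
  then show "x \<in> D (\<pi> s)" using mem_alphaD_sclass t(1) by blast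
qed

lemma alphaMap_mono:
  assumes s: "s \<in> S" and x: "x \<in> D (\<pi> (iv s))" and y: "y \<in> D (\<pi> (iv s))" and xy: "x \<le> y"
  shows "\<alpha> (\<pi> s) x \<le> \<alpha> (\<pi> s) y"
proof -
  obtain u where u: "s \<sim> u" "y \<in> Xs (iv u)" using y mem_alphaD_sclass_inv[OF s] by blast
  have uS: "u \<in> S" using sim_parallel[OF u(1)] by blast
  have "x \<in> X" using x alphaD_subset by blast
  then have xu: "x \<in> Xs (iv u)"
    using order_ideal_Xs[of "iv u"] uS u(2) xy unfolding order_ideal_def by auto
  have "th u x \<le> th u y" using order_iso_on_theta[OF uS] xu u(2) xy unfolding order_iso_on_def by blast
  then show ?thesis using alphaMap_sclass u(1) xu u(2) by simp
qed

text \<open>Monotonicity of \<open>\<alpha>\<^bsub>\<pi> s\<^sup>*\<^esub>\<close>, the inverse of \<open>\<alpha>\<^bsub>\<pi> s\<^esub>\<close>, gives the order reflection.\<close>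

lemma order_iso_on_alphaMap:
  assumes s: "s \<in> S"
  shows "order_iso_on (\<alpha> (\<pi> s)) (D (\<pi> (iv s))) (D (\<pi> s))"
  unfolding order_iso_on_def
proof (intro conjI ballI iffI)
  show "bij_betw (\<alpha> (\<pi> s)) (D (\<pi> (iv s))) (D (\<pi> s))" using bij_betw_alphaMap[OF s] .
  fix x y assume x: "x \<in> D (\<pi> (iv s))" and y: "y \<in> D (\<pi> (iv s))"
  show "x \<le> y \<Longrightarrow> \<alpha> (\<pi> s) x \<le> \<alpha> (\<pi> s) y" using alphaMap_mono[OF s x y] .
  assume "\<alpha> (\<pi> s) x \<le> \<alpha> (\<pi> s) y"
  then have "\<alpha> (\<pi> (iv s)) (\<alpha> (\<pi> s) x) \<le> \<alpha> (\<pi> (iv s)) (\<alpha> (\<pi> s) y)"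
    using alphaMap_mono[of "iv s"] alphaMap_in_alphaD[OF s] x y s by simp
  then show "x \<le> y" using alphaMap_inv_alphaMap[OF s] x y by simp
qed

lemma ordered_action_quotient: "ordered_action (q_arrows S d c m) (q_inv S d c m) X D \<alpha>"
  unfolding ordered_action_def q_arrows_def
  using order_ideal_alphaD order_iso_on_alphaMap q_inv_sclass by auto

end

theorem mainTheorem13:
  fixes S :: "'a set" and S0 :: "'o set" and d c :: "'a \<Rightarrow> 'o" and m :: "'a \<Rightarrow> 'a \<Rightarrow> 'a"
    and X :: "'x::order set" and Xs :: "'a \<Rightarrow> 'x set" and th :: "'a \<Rightarrow> 'x \<Rightarrow> 'x"
  assumes "inv_semigroupoid S S0 d c m"
    and "E_unitary S d c m"
    and "global_action S d c m (sinv S d c m) X Xs th"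
    and "ordered_action S (sinv S d c m) X Xs th"
  shows "(\<forall>s t x. sigma S d c m s t \<longrightarrow>
            x \<in> Xs (sinv S d c m s) \<longrightarrow> x \<in> Xs (sinv S d c m t) \<longrightarrow> th s x = th t x)
    \<and> (\<forall>s\<in>S. \<forall>t x. sigma S d c m s t \<longrightarrow> x \<in> Xs (sinv S d c m t) \<longrightarrow>
            alphaMap S d c m Xs th (sclass S d c m s) x = th t x)
    \<and> (\<forall>s\<in>S. bij_betw (alphaMap S d c m Xs th (sclass S d c m s))
            (alphaD Xs (sclass S d c m (sinv S d c m s))) (alphaD Xs (sclass S d c m s)))
    \<and> partial_action (q_arrows S d c m) (q_d d) (q_d c) (q_mult S d c m) (q_inv S d c m)
        X (alphaD Xs) (alphaMap S d c m Xs th)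
    \<and> ordered_action (q_arrows S d c m) (q_inv S d c m) X (alphaD Xs) (alphaMap S d c m Xs th)
    \<and> (\<forall>s\<in>S. \<forall>x\<in>Xs (sinv S d c m s). alphaMap S d c m Xs th (sclass S d c m s) x = th s x)"
proof -
  interpret E_unitary_ordered_global_action S S0 d c m X Xs th
    by unfold_locales (fact assms)+
  show ?thesis
    using theta_eq_if_sim alphaMap_sclass bij_betw_alphaMap partial_action_quotient
      ordered_action_quotient alphaMap_sclass[OF sim_refl] by blast
qed

end
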